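(* Let $F:\mathcal A\to\mathcal B$ be an additive functor between additive categories. Then $F$ satisfies both conditions (WSM) and (I) if and only if $F$ satisfies condition (SM).
   Context: (WSM): for each morphism $u:X\to Y$ in $\mathcal A$ with $F(u)$ a splitting monomorphism in $\mathcal B$, there exists a morphism $u':Y\to X'$ in $\mathcal A$ (some object $X'$) with $F(u'u)$ an isomorphism. (I): for each morphism $u:X\to Y$ in $\mathcal A$ with $F(u)$ an isomorphism, there exists $u':Y\to X$ with $F(u)^{-1}=F(u')$. (SM): for each morphism $u:X\to Y$ in $\mathcal A$ with $F(u)$ a splitting monomorphism, there exists $u':Y\to X$ with $F(u'u)=1_{F(X)}$. *)

theory Defs
  imports Main
begin

text \<open>Categories are given by a set of objects, a set of morphisms, domain, codomain,
  composition (Comp g f = g after f) and identities.\<close>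

record ('o, 'm) addcat =
  Obj  :: "'o set"
  Mor  :: "'m set"
  Dom  :: "'m \<Rightarrow> 'o"
  Cod  :: "'m \<Rightarrow> 'o"
  Comp :: "'m \<Rightarrow> 'm \<Rightarrow> 'm"
  Id   :: "'o \<Rightarrow> 'm"
  Add  :: "'m \<Rightarrow> 'm \<Rightarrow> 'm"
  Zero :: "'o \<Rightarrow> 'o \<Rightarrow> 'm"
  Neg  :: "'m \<Rightarrow> 'm"

definition hom :: "('o, 'm) addcat \<Rightarrow> 'o \<Rightarrow> 'o \<Rightarrow> 'm set" where
  "hom C X Y = {f \<in> Mor C. Dom C f = X \<and> Cod C f = Y}"

definition is_category :: "('o, 'm) addcat \<Rightarrow> bool" where
  "is_category C \<longleftrightarrow>
     (\<forall>f \<in> Mor C. Dom C f \<in> Obj C \<and> Cod C f \<in> Obj C) \<and>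
     (\<forall>X \<in> Obj C. Id C X \<in> hom C X X) \<and>
     (\<forall>X \<in> Obj C. \<forall>Y \<in> Obj C. \<forall>Z \<in> Obj C. \<forall>f \<in> hom C X Y. \<forall>g \<in> hom C Y Z.
        Comp C g f \<in> hom C X Z) \<and>
     (\<forall>W \<in> Obj C. \<forall>X \<in> Obj C. \<forall>Y \<in> Obj C. \<forall>Z \<in> Obj C.
        \<forall>f \<in> hom C W X. \<forall>g \<in> hom C X Y. \<forall>h \<in> hom C Y Z.
        Comp C h (Comp C g f) = Comp C (Comp C h g) f) \<and>
     (\<forall>X \<in> Obj C. \<forall>Y \<in> Obj C. \<forall>f \<in> hom C X Y.
        Comp C (Id C Y) f = f \<and> Comp C f (Id C X) = f)"

definition is_preadditive :: "('o, 'm) addcat \<Rightarrow> bool" where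
  "is_preadditive C \<longleftrightarrow> is_category C \<and>
     (\<forall>X \<in> Obj C. \<forall>Y \<in> Obj C.
        Zero C X Y \<in> hom C X Y \<and>
        (\<forall>f \<in> hom C X Y. \<forall>g \<in> hom C X Y. Add C f g \<in> hom C X Y) \<and>
        (\<forall>f \<in> hom C X Y. Neg C f \<in> hom C X Y) \<and>
        (\<forall>f \<in> hom C X Y. \<forall>g \<in> hom C X Y. \<forall>h \<in> hom C X Y.
           Add C (Add C f g) h = Add C f (Add C g h)) \<and>
        (\<forall>f \<in> hom C X Y. \<forall>g \<in> hom C X Y. Add C f g = Add C g f) \<and>
        (\<forall>f \<in> hom C X Y. Add C (Zero C X Y) f = f) \<and>
        (\<forall>f \<in> hom C X Y. Add C (Neg C f) f = Zero C X Y)) \<and>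
     (\<forall>X \<in> Obj C. \<forall>Y \<in> Obj C. \<forall>Z \<in> Obj C.
        (\<forall>f \<in> hom C X Y. \<forall>g1 \<in> hom C Y Z. \<forall>g2 \<in> hom C Y Z.
           Comp C (Add C g1 g2) f = Add C (Comp C g1 f) (Comp C g2 f)) \<and>
        (\<forall>f1 \<in> hom C X Y. \<forall>f2 \<in> hom C X Y. \<forall>g \<in> hom C Y Z.
           Comp C g (Add C f1 f2) = Add C (Comp C g f1) (Comp C g f2)))"

definition is_additive_category :: "('o, 'm) addcat \<Rightarrow> bool" where
  "is_additive_category C \<longleftrightarrow> is_preadditive C \<and>
     (\<exists>Z0 \<in> Obj C. \<forall>X \<in> Obj C. (\<exists>!f. f \<in> hom C Z0 X) \<and> (\<exists>!f. f \<in> hom C X Z0)) \<and>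
     (\<forall>X \<in> Obj C. \<forall>Y \<in> Obj C. \<exists>S \<in> Obj C. \<exists>p1 p2 i1 i2.
        p1 \<in> hom C S X \<and> p2 \<in> hom C S Y \<and> i1 \<in> hom C X S \<and> i2 \<in> hom C Y S \<and>
        Comp C p1 i1 = Id C X \<and> Comp C p2 i2 = Id C Y \<and>
        Comp C p1 i2 = Zero C Y X \<and> Comp C p2 i1 = Zero C X Y \<and>
        Add C (Comp C i1 p1) (Comp C i2 p2) = Id C S)"

definition is_functor ::
  "('o1, 'm1) addcat \<Rightarrow> ('o2, 'm2) addcat \<Rightarrow> ('o1 \<Rightarrow> 'o2) \<Rightarrow> ('m1 \<Rightarrow> 'm2) \<Rightarrow> bool" where
  "is_functor A B Fo Fm \<longleftrightarrow>
     (\<forall>X \<in> Obj A. Fo X \<in> Obj B) \<and>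
     (\<forall>X \<in> Obj A. \<forall>Y \<in> Obj A. \<forall>f \<in> hom A X Y. Fm f \<in> hom B (Fo X) (Fo Y)) \<and>
     (\<forall>X \<in> Obj A. Fm (Id A X) = Id B (Fo X)) \<and>
     (\<forall>X \<in> Obj A. \<forall>Y \<in> Obj A. \<forall>Z \<in> Obj A. \<forall>f \<in> hom A X Y. \<forall>g \<in> hom A Y Z.
        Fm (Comp A g f) = Comp B (Fm g) (Fm f))"

definition is_additive_functor ::
  "('o1, 'm1) addcat \<Rightarrow> ('o2, 'm2) addcat \<Rightarrow> ('o1 \<Rightarrow> 'o2) \<Rightarrow> ('m1 \<Rightarrow> 'm2) \<Rightarrow> bool" where
  "is_additive_functor A B Fo Fm \<longleftrightarrow> is_functor A B Fo Fm \<and>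
     (\<forall>X \<in> Obj A. \<forall>Y \<in> Obj A. \<forall>f \<in> hom A X Y. \<forall>g \<in> hom A X Y.
        Fm (Add A f g) = Add B (Fm f) (Fm g))"

definition split_mono :: "('o, 'm) addcat \<Rightarrow> 'o \<Rightarrow> 'o \<Rightarrow> 'm \<Rightarrow> bool" where
  "split_mono C X Y f \<longleftrightarrow> f \<in> hom C X Y \<and> (\<exists>g \<in> hom C Y X. Comp C g f = Id C X)"

definition is_inverse :: "('o, 'm) addcat \<Rightarrow> 'o \<Rightarrow> 'o \<Rightarrow> 'm \<Rightarrow> 'm \<Rightarrow> bool" where
  "is_inverse C X Y f g \<longleftrightarrow> f \<in> hom C X Y \<and> g \<in> hom C Y X \<and>
     Comp C g f = Id C X \<and> Comp C f g = Id C Y"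

definition iso :: "('o, 'm) addcat \<Rightarrow> 'o \<Rightarrow> 'o \<Rightarrow> 'm \<Rightarrow> bool" where
  "iso C X Y f \<longleftrightarrow> (\<exists>g. is_inverse C X Y f g)"

definition cond_WSM ::
  "('o1, 'm1) addcat \<Rightarrow> ('o2, 'm2) addcat \<Rightarrow> ('o1 \<Rightarrow> 'o2) \<Rightarrow> ('m1 \<Rightarrow> 'm2) \<Rightarrow> bool" where
  "cond_WSM A B Fo Fm \<longleftrightarrow>
     (\<forall>X \<in> Obj A. \<forall>Y \<in> Obj A. \<forall>u \<in> hom A X Y.
        split_mono B (Fo X) (Fo Y) (Fm u) \<longrightarrow>
        (\<exists>X' \<in> Obj A. \<exists>u' \<in> hom A Y X'. iso B (Fo X) (Fo X') (Fm (Comp A u' u))))"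

definition cond_I ::
  "('o1, 'm1) addcat \<Rightarrow> ('o2, 'm2) addcat \<Rightarrow> ('o1 \<Rightarrow> 'o2) \<Rightarrow> ('m1 \<Rightarrow> 'm2) \<Rightarrow> bool" where
  "cond_I A B Fo Fm \<longleftrightarrow>
     (\<forall>X \<in> Obj A. \<forall>Y \<in> Obj A. \<forall>u \<in> hom A X Y.
        iso B (Fo X) (Fo Y) (Fm u) \<longrightarrow>
        (\<exists>u' \<in> hom A Y X. is_inverse B (Fo X) (Fo Y) (Fm u) (Fm u')))"

definition cond_SM ::
  "('o1, 'm1) addcat \<Rightarrow> ('o2, 'm2) addcat \<Rightarrow> ('o1 \<Rightarrow> 'o2) \<Rightarrow> ('m1 \<Rightarrow> 'm2) \<Rightarrow> bool" where
  "cond_SM A B Fo Fm \<longleftrightarrow>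
     (\<forall>X \<in> Obj A. \<forall>Y \<in> Obj A. \<forall>u \<in> hom A X Y.
        split_mono B (Fo X) (Fo Y) (Fm u) \<longrightarrow>
        (\<exists>u' \<in> hom A Y X. Fm (Comp A u' u) = Id B (Fo X)))"

end

theory Submission
  imports Defs
begin

text \<open>Given (WSM) and (I), a split mono \<open>F u\<close> admits \<open>u'\<close> with \<open>F (u' u)\<close> invertible, and
  composing \<open>u'\<close> with a preimage of that inverse yields a retraction of \<open>u\<close> modulo \<open>F\<close>.
  Conversely, (SM) gives (WSM) with \<open>X' = X\<close>, and since a left inverse of an isomorphism is
  its inverse, the morphism supplied by (SM) for an isomorphism \<open>F u\<close> witnesses (I).
  The argument works for any functor between categories.\<close>

lemma additive_category_is_category: "is_additive_category C \<Longrightarrow> is_category C"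
  by (simp add: is_additive_category_def is_preadditive_def)

lemma additive_functor_is_functor: "is_additive_functor A B Fo Fm \<Longrightarrow> is_functor A B Fo Fm"
  by (simp add: is_additive_functor_def)

lemma iso_Id:
  assumes "is_category C" and "X \<in> Obj C"
  shows "iso C X X (Id C X)"
  using assms unfolding iso_def is_inverse_def is_category_def by metis

lemma is_inverse_imp_split_mono: "is_inverse C X Y f g \<Longrightarrow> split_mono C X Y f"
  unfolding is_inverse_def split_mono_def by blast

lemma left_inverse_eq_inverse:
  assumes C: "is_category C" and X: "X \<in> Obj C" and Y: "Y \<in> Obj C"
    and inv: "is_inverse C X Y f g" and h: "h \<in> hom C Y X" and hf: "Comp C h f = Id C X"
  shows "h = g"
proof -
  note Cd = C[unfolded is_category_def]
  have f: "f \<in> hom C X Y" and g: "g \<in> hom C Y X" and fg: "Comp C f g = Id C Y"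
    using inv by (auto simp: is_inverse_def)
  have "h = Comp C h (Id C Y)" using Cd X Y h by metis
  also have "\<dots> = Comp C (Comp C h f) g" using Cd X Y f g h fg by metis
  also have "\<dots> = g" using Cd X Y g hf by metis
  finally show ?thesis .
qed

context
  fixes A :: "('o1, 'm1) addcat" and B :: "('o2, 'm2) addcat"
    and Fo :: "'o1 \<Rightarrow> 'o2" and Fm :: "'m1 \<Rightarrow> 'm2"
  assumes cat_A: "is_category A" and cat_B: "is_category B"
    and F_is_functor: "is_functor A B Fo Fm"
begin

lemma cond_SM_if_WSM_I:
  assumes W: "cond_WSM A B Fo Fm" and I: "cond_I A B Fo Fm"
  shows "cond_SM A B Fo Fm"
  unfolding cond_SM_def
proof (intro ballI impI)
  note Ad = cat_A[unfolded is_category_def] and Fd = F_is_functor[unfolded is_functor_def]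
  fix X Y u assume X: "X \<in> Obj A" and Y: "Y \<in> Obj A" and u: "u \<in> hom A X Y"
    and "split_mono B (Fo X) (Fo Y) (Fm u)"
  with W obtain X' u' where X': "X' \<in> Obj A" and u': "u' \<in> hom A Y X'"
    and iso: "iso B (Fo X) (Fo X') (Fm (Comp A u' u))"
    unfolding cond_WSM_def by blast
  have u'u: "Comp A u' u \<in> hom A X X'" using Ad X Y X' u u' by blast
  from I X X' u'u iso obtain v where v: "v \<in> hom A X' X"
    and inv: "is_inverse B (Fo X) (Fo X') (Fm (Comp A u' u)) (Fm v)"
    unfolding cond_I_def by blast
  have "Fm (Comp A (Comp A v u') u) = Fm (Comp A v (Comp A u' u))"
    using Ad X Y X' u u' v by metis
  also have "\<dots> = Comp B (Fm v) (Fm (Comp A u' u))" using Fd X X' u'u v by metis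
  also have "\<dots> = Id B (Fo X)" using inv by (simp add: is_inverse_def)
  finally have "Fm (Comp A (Comp A v u') u) = Id B (Fo X)" .
  moreover have "Comp A v u' \<in> hom A Y X" using Ad X Y X' v u' by blast
  ultimately show "\<exists>w \<in> hom A Y X. Fm (Comp A w u) = Id B (Fo X)" by blast
qed

lemma cond_WSM_if_SM:
  assumes S: "cond_SM A B Fo Fm"
  shows "cond_WSM A B Fo Fm"
  unfolding cond_WSM_def
proof (intro ballI impI)
  fix X Y u assume X: "X \<in> Obj A" and "Y \<in> Obj A" and "u \<in> hom A X Y"
    and "split_mono B (Fo X) (Fo Y) (Fm u)"
  with S obtain u' where u': "u' \<in> hom A Y X" and retr: "Fm (Comp A u' u) = Id B (Fo X)"
    unfolding cond_SM_def by blast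
  have "Fo X \<in> Obj B" using F_is_functor X by (simp add: is_functor_def)
  then have "iso B (Fo X) (Fo X) (Fm (Comp A u' u))" unfolding retr by (rule iso_Id[OF cat_B])
  with X u' show "\<exists>X' \<in> Obj A. \<exists>u' \<in> hom A Y X'. iso B (Fo X) (Fo X') (Fm (Comp A u' u))"
    by blast
qed

lemma cond_I_if_SM:
  assumes S: "cond_SM A B Fo Fm"
  shows "cond_I A B Fo Fm"
  unfolding cond_I_def
proof (intro ballI impI)
  note Fd = F_is_functor[unfolded is_functor_def]
  fix X Y u assume X: "X \<in> Obj A" and Y: "Y \<in> Obj A" and u: "u \<in> hom A X Y"
    and "iso B (Fo X) (Fo Y) (Fm u)"
  then obtain g where inv: "is_inverse B (Fo X) (Fo Y) (Fm u) g" unfolding iso_def by blast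
  from S X Y u is_inverse_imp_split_mono[OF inv]
  obtain u' where u': "u' \<in> hom A Y X" and "Fm (Comp A u' u) = Id B (Fo X)"
    unfolding cond_SM_def by blast
  then have "Comp B (Fm u') (Fm u) = Id B (Fo X)" using Fd X Y u by metis
  moreover have "Fo X \<in> Obj B" "Fo Y \<in> Obj B" "Fm u' \<in> hom B (Fo Y) (Fo X)"
    using Fd X Y u' by blast+
  ultimately have "Fm u' = g" using left_inverse_eq_inverse[OF cat_B _ _ inv] by blast
  with u' inv show "\<exists>u' \<in> hom A Y X. is_inverse B (Fo X) (Fo Y) (Fm u) (Fm u')" by blast
qed

end

theorem proposition3p1:
  fixes A :: "('o1, 'm1) addcat" and B :: "('o2, 'm2) addcat"
    and Fo :: "'o1 \<Rightarrow> 'o2" and Fm :: "'m1 \<Rightarrow> 'm2"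
  assumes "is_additive_category A" and "is_additive_category B"
    and "is_additive_functor A B Fo Fm"
  shows "(cond_WSM A B Fo Fm \<and> cond_I A B Fo Fm) \<longleftrightarrow> cond_SM A B Fo Fm"
proof -
  have "is_category A" and "is_category B" and "is_functor A B Fo Fm"
    using assms additive_category_is_category additive_functor_is_functor by blast+
  then show ?thesis using cond_SM_if_WSM_I cond_WSM_if_SM cond_I_if_SM by blast
qed

end
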